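(* Let $d,a,b$ be positive integers, $r=(d+2b)/d$, $R=(a+d)/d$, with $R\ge3r$, and let $\rho=x_1-r$ with $x_1$ as in the context. On the upper semicircle $t(x)=x+i\sqrt{\rho^2-(x-r)^2}$, $r-\rho\le x\le r+\rho$, the function $x\mapsto\Phi(t(x))$ is strictly increasing (for $x$ where $t(x)\ne r$, i.e. on the whole semicircle).
   Context: For $t\in\mathbb C\setminus\{\pm1,\pm r\}$ let $\Phi(t)=d\log|t+r|-d\log|t-r|+(a+d)(\log|t-1|-\log|t+1|)$. Under $R\ge3r$ there is a unique $x_1\in(r,\infty)$ with $\Phi(x_1)=0$. *)

theory Defs
  imports Complex_Main
begin

definition Phi :: "real \<Rightarrow> real \<Rightarrow> real \<Rightarrow> complex \<Rightarrow> real" where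
  "Phi d a r t = d * ln (cmod (t + complex_of_real r)) - d * ln (cmod (t - complex_of_real r))
      + (a + d) * (ln (cmod (t - 1)) - ln (cmod (t + 1)))"

definition semicircle :: "real \<Rightarrow> real \<Rightarrow> real \<Rightarrow> complex" where
  "semicircle r rho x = Complex x (sqrt (rho\<^sup>2 - (x - r)\<^sup>2))"

end

theory Submission
  imports Defs
begin

(*
  Write t(x) for the point of the upper semicircle of centre r and radius rho
  above x.  For every real c the squared distance |t(x) + c|^2 = (x+c)^2 + rho^2 - (x-r)^2
  is the affine function  2(r+c) x + rho^2 + c^2 - r^2  of x.  Hence along the semicircle
     2 Phi(t(x)) = d (ln Q_r(x) - ln rho^2) + (a+d) (ln Q_{-1}(x) - ln Q_1(x)),
  where Q_c denotes that affine function.  The first term is increasing because r > 0, and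
  the second because  ln (alpha x + K) - ln (beta x + K)  increases whenever alpha < beta and
  K < 0; here K = rho^2 + 1 - r^2, which is negative once 0 < rho < r - 1.  The same
  bound keeps all arguments of the logarithms positive.

  The one genuinely analytic input is therefore the root location  x1 < 2r - 1, i.e.
  rho < r - 1.  It follows from the hypothesis R >= 3r via the elementary inequality
     ln ((x+r)/(x-r)) < 3r ln ((x+1)/(x-1))   for r > 1, x >= 2r - 1,
  which shows that Phi is negative on [2r-1, oo) along the real axis.
*)


text \<open>The lower bound  ln z >= 2(z-1)/(z+1)  for z >= 1 (the first term of the
  series of ln z in powers of (z-1)/(z+1)); proved by monotonicity of the difference.\<close>
lemma ln_ge_two_ratio:
  fixes z :: real
  assumes "1 \<le> z"
  shows "2 * (z - 1) / (z + 1) \<le> ln z"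
proof -
  let ?h = "\<lambda>z. ln z - 2 * (z - 1) / (z + 1)"
  have "?h 1 \<le> ?h z"
  proof (rule DERIV_nonneg_imp_nondecreasing[OF assms])
    fix w :: real assume w: "1 \<le> w" "w \<le> z"
    have "(?h has_real_derivative (1/w - 4/(w+1)^2)) (at w)"
      using w by (auto intro!: derivative_eq_intros simp: field_simps power2_eq_square)
    moreover have "4 * w \<le> (w+1)^2"
      using zero_le_power2[of "w - 1"] by (simp add: power2_eq_square algebra_simps)
    then have "1/w - 4/(w+1)^2 \<ge> 0" using w by (simp add: field_simps)
    ultimately show "\<exists>y. (?h has_real_derivative y) (at w) \<and> 0 \<le> y" by blast
  qed
  then show ?thesis by simp
qed

text \<open>For large x both sides are compared with 2r/(x-r) and 6r/x; for x <= 3/2 r the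
  cubed ratio ((x+1)/(x-1))^3 dominates (x+r)/(x-r) by a polynomial identity.\<close>
lemma ln_ratio_comparison:
  fixes r x :: real
  assumes r: "r > 1" and x: "x \<ge> 2*r - 1"
  shows "ln ((x+r)/(x-r)) < 3*r * ln ((x+1)/(x-1))"
proof -
  have xr: "x > r" and x1: "x > 1" using r x by linarith+
  show ?thesis
  proof (cases "2*x > 3*r")
    case True
    have "ln ((x+r)/(x-r)) = ln (1 + 2*r/(x-r))" using xr by (simp add: field_simps)
    also have "\<dots> \<le> 2*r/(x-r)" by (rule ln_add_one_self_le_self) (use xr r in simp)
    also have "\<dots> < 3*r*(2/x)" using True xr r x1 by (simp add: field_simps)
    also have "\<dots> \<le> 3*r * ln ((x+1)/(x-1))"
    proof -
      have "2*((x+1)/(x-1) - 1)/((x+1)/(x-1) + 1) \<le> ln ((x+1)/(x-1))"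
        by (rule ln_ge_two_ratio) (use x1 in \<open>simp add: field_simps\<close>)
      moreover have "2*((x+1)/(x-1) - 1)/((x+1)/(x-1) + 1) = 2/x"
        using x1 by (simp add: field_simps)
      ultimately show ?thesis using r by (intro mult_left_mono) auto
    qed
    finally show ?thesis .
  next
    case False
    have "x*(x-4) < 0" using x1 False x by (intro mult_pos_neg) auto
    then have "x^2-4*x-1 < 0" by (simp add: power2_eq_square algebra_simps)
    then have cubic_neg: "(x-1)*(x^2-4*x-1) < 0" using x1 by (simp add: mult_pos_neg)
    have "r*(x^2+3) \<le> (x+1)/2*(x^2+3)" using x by (intro mult_right_mono) auto
    moreover have "(x+1)/2*(x^2+3) - (3*x^2+1) = (x-1)*(x^2-4*x-1)/2"
      by (simp add: power2_eq_square algebra_simps)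
    ultimately have "r*(x^2+3) < 3*x^2+1" using cubic_neg by linarith
    moreover have "(x+1)^3*(x-r) - (x+r)*(x-1)^3 = 2*x*(3*x^2+1 - r*(x^2+3))"
      by (simp add: power2_eq_square power3_eq_cube algebra_simps)
    ultimately have "(x+r)*(x-1)^3 < (x+1)^3*(x-r)" using x1
      by (smt (verit) mult_pos_pos)
    then have "(x+r)/(x-r) < ((x+1)/(x-1))^3" using xr x1 by (simp add: field_simps power_divide)
    then have "ln ((x+r)/(x-r)) < ln (((x+1)/(x-1))^3)"
      using xr x1 r by (subst ln_less_cancel_iff) auto
    also have "\<dots> = 3 * ln ((x+1)/(x-1))" by (simp add: ln_realpow)
    also have "\<dots> < 3*r * ln ((x+1)/(x-1))" using x1 r by simp
    finally show ?thesis .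
  qed
qed


lemma Phi_real_axis:
  fixes d a r x :: real
  assumes "r > 1" and "x > r"
  shows "Phi d a r (complex_of_real x) = d * ln ((x+r)/(x-r)) - (a+d) * ln ((x+1)/(x-1))"
proof -
  have "complex_of_real x + complex_of_real r = complex_of_real (x+r)"
    and "complex_of_real x - complex_of_real r = complex_of_real (x-r)"
    and "complex_of_real x - 1 = complex_of_real (x-1)"
    and "complex_of_real x + 1 = complex_of_real (x+1)" by simp_all
  with assms show ?thesis
    unfolding Phi_def by (simp only: norm_of_real) (simp add: ln_div algebra_simps)
qed

lemma Phi_root_below:
  fixes d a r x :: real
  assumes d: "d > 0" and r: "r > 1" and ad: "a + d \<ge> 3*r*d"
    and x: "x > r" and root: "Phi d a r (complex_of_real x) = 0"
  shows "x < 2*r - 1"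
proof (rule ccontr)
  assume "\<not> x < 2*r - 1"
  then have "ln ((x+r)/(x-r)) < 3*r * ln ((x+1)/(x-1))"
    using r by (intro ln_ratio_comparison) auto
  moreover have "0 \<le> ln ((x+1)/(x-1))" using x r by simp
  ultimately have "d * ln ((x+r)/(x-r)) < (3*r*d) * ln ((x+1)/(x-1))"
    using d by (simp add: algebra_simps)
  also have "\<dots> \<le> (a+d) * ln ((x+1)/(x-1))"
    using ad \<open>0 \<le> ln ((x+1)/(x-1))\<close> by (rule mult_right_mono)
  finally show False using root Phi_real_axis[OF r x] by simp
qed


text \<open>The squared distance from the point of the semicircle (centre r, radius rho)
  above x to the real point -c; it is affine in x.\<close>
definition semicircle_sqdist :: "real \<Rightarrow> real \<Rightarrow> real \<Rightarrow> real \<Rightarrow> real" where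
  "semicircle_sqdist r rho c x = 2*(r+c)*x + rho\<^sup>2 + c\<^sup>2 - r\<^sup>2"

lemma ln_norm_semicircle:
  fixes r rho c x :: real
  assumes "\<bar>x - r\<bar> \<le> rho"
  shows "ln (cmod (semicircle r rho x + complex_of_real c)) = ln (semicircle_sqdist r rho c x) / 2"
proof -
  define s where "s = sqrt (rho\<^sup>2 - (x - r)\<^sup>2)"
  have "\<bar>x - r\<bar>\<^sup>2 \<le> rho\<^sup>2" using assms by (intro power_mono) auto
  then have s2: "s\<^sup>2 = rho\<^sup>2 - (x - r)\<^sup>2" by (simp add: s_def)
  have "semicircle r rho x + complex_of_real c = Complex (x + c) s"
    by (simp add: semicircle_def s_def complex_eq_iff)
  then have "cmod (semicircle r rho x + complex_of_real c) = sqrt ((x + c)\<^sup>2 + s\<^sup>2)"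
    by (simp add: complex_norm)
  moreover have "(x + c)\<^sup>2 + s\<^sup>2 = semicircle_sqdist r rho c x"
    unfolding s2 semicircle_sqdist_def by (simp add: power2_eq_square algebra_simps)
  moreover have "0 \<le> (x + c)\<^sup>2 + s\<^sup>2" by simp
  ultimately show ?thesis by (simp add: ln_sqrt)
qed

text \<open>Positivity of the squared distances on the right part of the semicircle:
  at x = r - rho the distance to -c is |r - rho + c|, and it grows with x when r + c >= 0.\<close>
lemma semicircle_sqdist_pos:
  fixes r rho c x :: real
  assumes "r + c \<ge> 0" and "x \<ge> r - rho" and "r - rho + c \<noteq> 0"
  shows "semicircle_sqdist r rho c x > 0"
proof -
  have "semicircle_sqdist r rho c x = (r - rho + c)\<^sup>2 + 2*(r+c)*(x - (r - rho))"
    unfolding semicircle_sqdist_def by (simp add: power2_eq_square algebra_simps)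
  moreover have "2*(r+c)*(x - (r - rho)) \<ge> 0" using assms by simp
  ultimately show ?thesis using assms(3) by (smt (verit) zero_less_power2)
qed

lemma Phi_semicircle:
  fixes d a r rho x :: real
  assumes "\<bar>x - r\<bar> \<le> rho"
  shows "Phi d a r (semicircle r rho x) =
      d/2 * (ln (semicircle_sqdist r rho r x) - ln (rho\<^sup>2))
    + (a+d)/2 * (ln (semicircle_sqdist r rho (-1) x) - ln (semicircle_sqdist r rho 1 x))"
proof -
  have "semicircle r rho x - complex_of_real r = semicircle r rho x + complex_of_real (-r)"
    and "semicircle r rho x - 1 = semicircle r rho x + complex_of_real (-1)"
    and "semicircle r rho x + 1 = semicircle r rho x + complex_of_real 1" by simp_all
  moreover have "semicircle_sqdist r rho (-r) x = rho\<^sup>2"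
    by (simp add: semicircle_sqdist_def)
  ultimately show ?thesis
    unfolding Phi_def using ln_norm_semicircle[OF assms]
    by (simp only:) (simp add: algebra_simps)
qed


text \<open>ln (alpha x + K) - ln (beta x + K) is strictly increasing in x when alpha < beta
  and K < 0, as long as the arguments stay positive: cross-multiplying, the claim reduces
  to K (alpha - beta) (u - v) < 0.\<close>
lemma ln_affine_ratio_strict_mono:
  fixes alpha beta K u v :: real
  assumes "K < 0" and "alpha < beta" and "u < v"
    and pos: "alpha*u + K > 0" "alpha*v + K > 0" "beta*u + K > 0" "beta*v + K > 0"
  shows "ln (alpha*u + K) - ln (beta*u + K) < ln (alpha*v + K) - ln (beta*v + K)"
proof -
  have "K * (alpha - beta) > 0" using assms(1,2) by (simp add: mult_neg_neg)
  then have "K * (alpha - beta) * (u - v) < 0" using assms(3) by (simp add: mult_pos_neg)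
  then have "(alpha*u + K) * (beta*v + K) < (alpha*v + K) * (beta*u + K)"
    by (simp add: algebra_simps)
  then have "(alpha*u + K) / (beta*u + K) < (alpha*v + K) / (beta*v + K)"
    using pos by (simp add: divide_simps)
  then have "ln ((alpha*u + K) / (beta*u + K)) < ln ((alpha*v + K) / (beta*v + K))"
    using pos by simp
  then show ?thesis using pos by (simp add: ln_div)
qed

lemma Phi_semicircle_strict_mono:
  fixes d a r rho :: real
  assumes d: "d > 0" and a: "a + d > 0" and rho: "0 < rho" "rho < r - 1"
  shows "strict_mono_on {r - rho .. r + rho} (\<lambda>x. Phi d a r (semicircle r rho x))"
proof (rule strict_mono_onI)
  fix u v assume uv: "u \<in> {r - rho .. r + rho}" "v \<in> {r - rho .. r + rho}" "u < v"
  let ?Q = "semicircle_sqdist r rho"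
  define K where "K = rho\<^sup>2 + 1 - r\<^sup>2"
  have Q_minus1: "?Q (-1) x = 2*(r-1)*x + K" and Q_plus1: "?Q 1 x = 2*(r+1)*x + K" for x
    by (simp_all add: semicircle_sqdist_def K_def)
  have "rho\<^sup>2 < (r-1)\<^sup>2" using rho by (intro power_strict_mono) auto
  then have "K < 2 - 2*r" by (simp add: K_def power2_eq_square algebra_simps)
  then have "K < 0" using rho by linarith
  have pos: "?Q c u > 0" "?Q c v > 0" if "r + c \<ge> 0" "r - rho + c \<noteq> 0" for c
    using uv that by (auto intro: semicircle_sqdist_pos)
  have "ln (?Q r u) < ln (?Q r v)"
    using uv rho pos[of r] by (simp add: semicircle_sqdist_def)
  moreover have "ln (?Q (-1) u) - ln (?Q 1 u) < ln (?Q (-1) v) - ln (?Q 1 v)"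
    using pos[of "-1"] pos[of 1] rho \<open>K < 0\<close> \<open>u < v\<close>
    unfolding Q_minus1 Q_plus1 by (intro ln_affine_ratio_strict_mono) auto
  ultimately show "Phi d a r (semicircle r rho u) < Phi d a r (semicircle r rho v)"
    using uv d a by (simp add: Phi_semicircle add_strict_mono)
qed


theorem lemma4p11:
  fixes d a b :: nat and r R x1 rho :: real
  assumes "d > 0" and "a > 0" and "b > 0"
    and "r = (real d + 2 * real b) / real d"
    and "R = (real a + real d) / real d"
    and "R \<ge> 3 * r"
    and "x1 > r" and "Phi (real d) (real a) r (complex_of_real x1) = 0"
    and "rho = x1 - r"
  shows "strict_mono_on {r - rho .. r + rho} (\<lambda>x. Phi (real d) (real a) r (semicircle r rho x))"
proof -
  have "r = 1 + 2 * real b / real d" using assms(1,4) by (simp add: field_simps)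
  moreover have "2 * real b / real d > 0" using assms(1,3) by simp
  ultimately have r: "r > 1" by linarith
  have "real a + real d = R * real d" using assms(1,5) by (simp add: field_simps)
  moreover have "3 * r * real d \<le> R * real d" using assms(1,6) by simp
  ultimately have "real a + real d \<ge> 3 * r * real d" by linarith
  then have "x1 < 2*r - 1"
    using assms(1,7,8) r by (intro Phi_root_below) auto
  then have "0 < rho" "rho < r - 1" using assms(7,9) by linarith+
  then show ?thesis using assms(1) by (intro Phi_semicircle_strict_mono) auto
qed

end
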